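(* Let $\mathcal P=\mathcal P(V,R)$ be a binary quadratic operad over a field $\Bbbk$ with $V\neq0$. Then the dendriform splitting operad $\mathrm{pre}\,\mathcal P=\mathrm{preLie}\bullet\mathcal P$ does not satisfy the Dong Property.
   Context: A binary quadratic operad $\mathcal P(V,R)$ is generated by a finite-dimensional $S_2$-module $V$ of binary operations with relations $R\subseteq\mathcal F_V(3)$ ($\mathcal F_V$ the free operad). $\mathrm{preLie}$ is the operad of pre-Lie (left-symmetric) algebras and $\bullet$ denotes the Manin black product of binary quadratic operads (Ginzburg–Kapranov). Formal distributions and the Dong Property: for an algebra $A$ with a family of bilinear operations closed under the $S_2$-action, a formal distribution over $A$ is $a(z)=\sum_{s\in\mathbb Z}a(s)z^{-s-1}$, $a(s)\in A$. Distributions $a,b$ are local if for every operation $*$ there is $N\ge0$ with $(w-z)^N a(w)*b(z)=0$ in $A[[z^{\pm1},w^{\pm1}]]$. For $n\in\mathbb Z_+$ the $n$-product is $(a\,{*}_{(n)}\,b)(w)=\mathrm{Res}_{\xi=0}(\xi-w)^n a(\xi)*b(w)$. An operad satisfies the Dong Property if for every algebra $A$ over it and every three pairwise local distributions $a,b,c$ over $A$, $(a\,{*}_{(n)}\,b)$ and $c$ are local for all $n\in\mathbb Z_+$ and all operations $*$. *)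

theory Defs
  imports Complex_Main "HOL-Library.Function_Algebras"
begin

text \<open>
The S_2-module V of
binary operations has a basis indexed by a finite type 'i (so V is finite
dimensional and nonzero).  The S_2-action is the matrix tau:
tau(e_a) = sum_b (tau b a) e_b, required to be an involution.
An element of F_V(3) is encoded by its coordinates r i a b (i = 0,1,2) with
respect to the tree monomials (cyclic representatives)
  shape 0:  e_b(e_a(x1,x2),x3)
  shape 1:  e_b(e_a(x2,x3),x1)
  shape 2:  e_b(e_a(x3,x1),x2)
(every tree monomial in F_V(3) is uniquely of this form after using the
S_2-action; values r i a b for i >= 3 are ignored).
\<close>

type_synonym ('i, 'k) rel3 = "nat \<Rightarrow> 'i \<Rightarrow> 'i \<Rightarrow> 'k"

record ('i, 'k) bq_operad =
  tau  :: "'i \<Rightarrow> 'i \<Rightarrow> 'k"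
  rels :: "('i, 'k) rel3 set"

definition bq_wf :: "('i::finite, 'k::field) bq_operad \<Rightarrow> bool" where
  "bq_wf P \<longleftrightarrow>
     (\<forall>a c. (\<Sum>b\<in>UNIV. tau P c b * tau P b a) = (if c = a then 1 else 0))"

definition cyc3 :: "('i, 'k) rel3 \<Rightarrow> ('i, 'k) rel3" where
  "cyc3 r = (\<lambda>i a b. r ((i + 2) mod 3) a b)"

definition tr12 :: "('i::finite, 'k::field) bq_operad \<Rightarrow> ('i, 'k) rel3 \<Rightarrow> ('i, 'k) rel3" where
  "tr12 P r = (\<lambda>i c b.
      if i = 0 then (\<Sum>a\<in>UNIV. tau P c a * r 0 a b)
      else if i = 1 then (\<Sum>a\<in>UNIV. tau P c a * r 2 a b)
      else if i = 2 then (\<Sum>a\<in>UNIV. tau P c a * r 1 a b)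
      else 0)"

inductive_set s3_span :: "('i::finite, 'k::field) bq_operad \<Rightarrow> ('i, 'k) rel3 set \<Rightarrow> ('i, 'k) rel3 set"
  for P X where
    base: "r \<in> X \<Longrightarrow> r \<in> s3_span P X"
  | zero: "(\<lambda>i a b. 0) \<in> s3_span P X"
  | add: "r \<in> s3_span P X \<Longrightarrow> s \<in> s3_span P X \<Longrightarrow> (\<lambda>i a b. r i a b + s i a b) \<in> s3_span P X"
  | smult: "r \<in> s3_span P X \<Longrightarrow> (\<lambda>i a b. c * r i a b) \<in> s3_span P X"
  | cyc: "r \<in> s3_span P X \<Longrightarrow> cyc3 r \<in> s3_span P X"
  | tr: "r \<in> s3_span P X \<Longrightarrow> tr12 P r \<in> s3_span P X"

text \<open>P \<bullet> Q = P(V \<otimes> W \<otimes> sgn_2, Psi(R \<otimes> S)), where Psi multiplies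
coordinates of tree monomials of the same shape.\<close>

definition psi :: "('i, 'k::field) rel3 \<Rightarrow> ('j, 'k) rel3 \<Rightarrow> ('i \<times> 'j, 'k) rel3" where
  "psi r s = (\<lambda>i (a1, a2) (b1, b2). r i a1 b1 * s i a2 b2)"

definition black_product ::
  "('i::finite, 'k::field) bq_operad \<Rightarrow> ('j::finite, 'k) bq_operad \<Rightarrow> ('i \<times> 'j, 'k) bq_operad" where
  "black_product P Q =
     \<lparr> tau = (\<lambda>(b1, b2) (a1, a2). - (tau P b1 a1 * tau Q b2 a2)),
       rels = {psi r s | r s. r \<in> s3_span P (rels P) \<and> s \<in> s3_span Q (rels Q)} \<rparr>"

text \<open>Basis of the generating S_2-module of preLie: True = x o y, False = its
opposite y o x.  Relation (left-symmetry):
(x1 o x2) o x3 - x1 o (x2 o x3) - (x2 o x1) o x3 + x2 o (x1 o x3) = 0.\<close>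

definition preLie_rel :: "(bool, 'k::field) rel3" where
  "preLie_rel = (\<lambda>i a b.
      if i = 0 \<and> a \<and> b then 1
      else if i = 1 \<and> a \<and> \<not> b then -1
      else if i = 0 \<and> \<not> a \<and> b then -1
      else if i = 2 \<and> \<not> a \<and> \<not> b then 1
      else 0)"

definition preLie :: "(bool, 'k::field) bq_operad" where
  "preLie = \<lparr> tau = (\<lambda>b a. if b \<noteq> a then 1 else 0), rels = {preLie_rel} \<rparr>"

definition pre_operad :: "('i::finite, 'k::field) bq_operad \<Rightarrow> (bool \<times> 'i, 'k) bq_operad" where
  "pre_operad P = black_product preLie P"

text \<open>An algebra: a k-subspace A of a k-vector space (scalar multiplication sc),
with bilinear operations m j (one for each basis element of V) closed on A,
compatible with the S_2-action and satisfying the relations.\<close>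

definition rel_eval :: "('k \<Rightarrow> 'a \<Rightarrow> 'a) \<Rightarrow> ('i::finite \<Rightarrow> 'a \<Rightarrow> 'a \<Rightarrow> 'a::ab_group_add)
   \<Rightarrow> ('i, 'k) rel3 \<Rightarrow> 'a \<Rightarrow> 'a \<Rightarrow> 'a \<Rightarrow> 'a" where
  "rel_eval sc m r x1 x2 x3 =
     (\<Sum>a\<in>UNIV. \<Sum>b\<in>UNIV.
         sc (r 0 a b) (m b (m a x1 x2) x3)
       + sc (r 1 a b) (m b (m a x2 x3) x1)
       + sc (r 2 a b) (m b (m a x3 x1) x2))"

definition is_algebra :: "('k::field \<Rightarrow> 'a \<Rightarrow> 'a) \<Rightarrow> 'a::ab_group_add set
   \<Rightarrow> ('i::finite, 'k) bq_operad \<Rightarrow> ('i \<Rightarrow> 'a \<Rightarrow> 'a \<Rightarrow> 'a) \<Rightarrow> bool" where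
  "is_algebra sc A P m \<longleftrightarrow>
     vector_space sc \<and>
     0 \<in> A \<and> (\<forall>x\<in>A. \<forall>y\<in>A. x + y \<in> A) \<and> (\<forall>c. \<forall>x\<in>A. sc c x \<in> A) \<and>
     (\<forall>j x y. x \<in> A \<longrightarrow> y \<in> A \<longrightarrow> m j x y \<in> A) \<and>
     (\<forall>j x y z. x \<in> A \<longrightarrow> y \<in> A \<longrightarrow> z \<in> A \<longrightarrow>
        m j (x + y) z = m j x z + m j y z \<and> m j z (x + y) = m j z x + m j z y) \<and>
     (\<forall>j c x y. x \<in> A \<longrightarrow> y \<in> A \<longrightarrow>
        m j (sc c x) y = sc c (m j x y) \<and> m j x (sc c y) = sc c (m j x y)) \<and>
     (\<forall>a x y. x \<in> A \<longrightarrow> y \<in> A \<longrightarrow> m a y x = (\<Sum>b\<in>UNIV. sc (tau P b a) (m b x y))) \<and>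
     (\<forall>r\<in>rels P. \<forall>x1\<in>A. \<forall>x2\<in>A. \<forall>x3\<in>A. rel_eval sc m r x1 x2 x3 = 0)"

text \<open>The operation corresponding to the element sum_j c_j e_j of V.\<close>

definition op_of :: "('k \<Rightarrow> 'a \<Rightarrow> 'a) \<Rightarrow> ('i::finite \<Rightarrow> 'a \<Rightarrow> 'a \<Rightarrow> 'a::ab_group_add)
   \<Rightarrow> ('i \<Rightarrow> 'k) \<Rightarrow> 'a \<Rightarrow> 'a \<Rightarrow> 'a" where
  "op_of sc m c x y = (\<Sum>j\<in>UNIV. sc (c j) (m j x y))"

text \<open>A formal distribution a(z) = sum_s a(s) z^(-s-1) is its coefficient
function a :: int => 'a.  The coefficient of w^(-s-1) z^(-t-1) in
(w - z)^N a(w) * b(z) is  sum_(k=0..N) (-1)^k (N choose k) a(s+N-k) * b(t+k).\<close>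

definition local_wrt :: "('k::field \<Rightarrow> 'a \<Rightarrow> 'a) \<Rightarrow> ('a \<Rightarrow> 'a \<Rightarrow> 'a::ab_group_add)
   \<Rightarrow> (int \<Rightarrow> 'a) \<Rightarrow> (int \<Rightarrow> 'a) \<Rightarrow> bool" where
  "local_wrt sc mu a b \<longleftrightarrow>
     (\<exists>N::nat. \<forall>s t::int.
        (\<Sum>k\<le>N. sc ((-1) ^ k * of_nat (N choose k)) (mu (a (s + int N - int k)) (b (t + int k)))) = 0)"

definition local_dist :: "('k::field \<Rightarrow> 'a \<Rightarrow> 'a) \<Rightarrow> ('i::finite \<Rightarrow> 'a \<Rightarrow> 'a \<Rightarrow> 'a::ab_group_add)
   \<Rightarrow> (int \<Rightarrow> 'a) \<Rightarrow> (int \<Rightarrow> 'a) \<Rightarrow> bool" where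
  "local_dist sc m a b \<longleftrightarrow> (\<forall>c. local_wrt sc (op_of sc m c) a b)"

text \<open>(a *_(n) b)(w) = Res_xi (xi - w)^n a(xi) * b(w); its coefficient at
w^(-t-1) is sum_(k=0..n) (-1)^k (n choose k) a(n-k) * b(t+k).\<close>

definition n_product :: "('k::field \<Rightarrow> 'a \<Rightarrow> 'a) \<Rightarrow> ('a \<Rightarrow> 'a \<Rightarrow> 'a::ab_group_add)
   \<Rightarrow> nat \<Rightarrow> (int \<Rightarrow> 'a) \<Rightarrow> (int \<Rightarrow> 'a) \<Rightarrow> (int \<Rightarrow> 'a)" where
  "n_product sc mu n a b =
     (\<lambda>t. \<Sum>k\<le>n. sc ((-1) ^ k * of_nat (n choose k)) (mu (a (int n - int k)) (b (t + int k))))"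

text \<open>Dong property, for algebras whose underlying vector space lives in the
type 'a (the algebra is a subspace A of a 'k-vector space structure on 'a).\<close>

definition Dong_property_in :: "'a::ab_group_add itself \<Rightarrow> ('i::finite, 'k::field) bq_operad \<Rightarrow> bool" where
  "Dong_property_in (_ :: 'a itself) P \<longleftrightarrow>
     (\<forall>(sc :: 'k \<Rightarrow> 'a \<Rightarrow> 'a) A m a b c.
        is_algebra sc A P m \<and> range a \<subseteq> A \<and> range b \<subseteq> A \<and> range c \<subseteq> A \<and>
        local_dist sc m a b \<and> local_dist sc m b c \<and> local_dist sc m a c \<longrightarrow>
        (\<forall>n cf. local_dist sc m (n_product sc (op_of sc m cf) n a b) c))"

end

theory Submission
  imports Defs
begin

text \<open>
Fix a basis element j0 of V. On the sequence space with basis e_0, ..., e_4 there is a nilpotent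
pre P-algebra in which the operation (x \<circ> y) \<otimes> j0 sends (e_0, e_1) to e_3 and
(e_3, e_2) to e_4, all other products being forced by the S_2-action. Every iterated product has
outer operation (x \<circ> y) \<otimes> j0, and the coefficients of the pre-Lie relation at the two
monomials with this outer operation cancel, so all relations of pre P hold. The constant
distributions a = e_0 and b = e_1 are local, c(z) = e_2 z^-1 has vanishing products with both,
but a_(0) b is the constant distribution e_3, and the coefficient of z^-1 in
(w - z)^N e_3 c(z) is e_4 for every N.
\<close>

lemma sum_apply: "(\<Sum>i\<in>S. f i) x = (\<Sum>i\<in>S. f i x)"
  by (induction S rule: infinite_finite_induct) auto

lemma sum_UNIV_prod:
  "(\<Sum>x\<in>(UNIV :: ('a::finite \<times> 'b::finite) set). f x) = (\<Sum>a\<in>UNIV. \<Sum>b\<in>UNIV. f (a, b))"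
  by (simp add: sum.cartesian_product)

context vector_space
begin

lemma op_of_indicator: "op_of scale m (\<lambda>j. if j = J then 1 else 0) = m J"
  unfolding op_of_def by (simp add: fun_eq_iff if_distrib[of "\<lambda>c. c *s _"] cong: if_cong)

lemma n_product_0: "n_product scale mu 0 a b = (\<lambda>t. mu (a 0) (b t))"
  by (simp add: n_product_def)

lemma local_wrt_const: "local_wrt scale mu (\<lambda>_. x) (\<lambda>_. y)"
  unfolding local_wrt_def
  by (rule exI[of _ 1]) (simp add: numeral_eq_Suc)

lemma local_dist_const: "local_dist scale m (\<lambda>_. x) (\<lambda>_. y)"
  by (simp add: local_dist_def local_wrt_const)

lemma local_dist_if_products_vanish:
  assumes "\<And>j s t. m j (a s) (b t) = 0"
  shows "local_dist scale m a b"
  unfolding local_dist_def local_wrt_def op_of_def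
  by (intro allI exI[of _ 0]) (simp add: assms)

lemma not_local_wrt_const_pulse:
  assumes "mu x 0 = 0" and "mu x z \<noteq> 0"
  shows "\<not> local_wrt scale mu (\<lambda>_. x) (\<lambda>t. if t = 0 then z else 0)"
proof
  assume "local_wrt scale mu (\<lambda>_. x) (\<lambda>t. if t = 0 then z else 0)"
  then obtain N where "(\<Sum>k\<le>N. ((-1) ^ k * of_nat (N choose k)) *s
      mu x (if 0 + int k = 0 then z else 0)) = 0"
    unfolding local_wrt_def by blast
  moreover have "(\<Sum>k\<le>N. ((-1) ^ k * of_nat (N choose k)) *s
      mu x (if 0 + int k = 0 then z else 0)) = mu x z"
    by (subst sum.remove[of _ 0]) (auto simp: assms(1) intro!: sum.neutral)
  ultimately show False
    using assms(2) by simp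
qed

end

lemma tau_pre_operad:
  "tau (pre_operad P) (b1, b2) (a1, a2) = (if b1 = a1 then 0 else - tau P b2 a2)"
  by (simp add: pre_operad_def black_product_def preLie_def)

lemma preLie_span_cancel:
  assumes "r \<in> s3_span preLie {preLie_rel}" and "i < 3"
  shows "r i True True + r i False True = (0::'k::field)"
proof -
  have "\<forall>i<3. r i True True + r i False True = (0::'k)"
    using assms(1)
  proof (induction rule: s3_span.induct)
    case (smult r c)
    then show ?case by (simp flip: distrib_left)
  next
    case (tr r)
    have "i = 0 \<or> i = 1 \<or> i = 2" if "i < 3" for i :: nat
      using that by auto
    with tr.IH show ?case
      by (auto simp: tr12_def preLie_def UNIV_bool add.commute)
  qed (auto simp: preLie_rel_def cyc3_def algebra_simps)
  with assms(2) show ?thesis by blast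
qed

definition scale_seq :: "'k::field \<Rightarrow> (nat \<Rightarrow> 'k) \<Rightarrow> nat \<Rightarrow> 'k" where
  "scale_seq c f = (\<lambda>n. c * f n)"

lemma vector_space_scale_seq: "vector_space scale_seq"
  unfolding vector_space_def module_def scale_seq_def
  by (auto simp: fun_eq_iff algebra_simps)

definition unit_seq :: "nat \<Rightarrow> nat \<Rightarrow> 'k::field" where
  "unit_seq k = (\<lambda>n. if n = k then 1 else 0)"

lemma unit_seq_neq_0: "unit_seq k \<noteq> 0"
  by (simp add: unit_seq_def fun_eq_iff)

definition witness_mult ::
  "('i::finite, 'k::field) bq_operad \<Rightarrow> 'i \<Rightarrow> bool \<times> 'i \<Rightarrow> (nat \<Rightarrow> 'k) \<Rightarrow> (nat \<Rightarrow> 'k) \<Rightarrow> nat \<Rightarrow> 'k"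
where
  "witness_mult P j0 = (\<lambda>(a1, a2) u v n.
     if n = 3 then (if a2 = j0 then u 0 * v 1 else 0) - tau P j0 a2 * u 1 * v 0
     else if n = 4 then
       (if a1 then (if a2 = j0 then u 3 * v 2 else 0) else - tau P j0 a2 * u 2 * v 3)
     else 0)"

lemma witness_mult_3:
  "witness_mult P j0 (a1, a2) u v 3 = (if a2 = j0 then u 0 * v 1 else 0) - tau P j0 a2 * (u 1 * v 0)"
  by (simp add: witness_mult_def)

lemma witness_mult_4:
  "witness_mult P j0 (a1, a2) u v 4
    = (if a1 then (if a2 = j0 then u 3 * v 2 else 0) else - (tau P j0 a2 * (u 2 * v 3)))"
  by (simp add: witness_mult_def)

lemma witness_mult_other: "n \<noteq> 3 \<Longrightarrow> n \<noteq> 4 \<Longrightarrow> witness_mult P j0 A u v n = 0"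
  by (simp add: witness_mult_def split: prod.split)

lemma sum_tau_delta:
  fixes P :: "('i::finite, 'k::field) bq_operad"
  shows "(\<Sum>b\<in>UNIV. tau P b a * (if b = j then x else 0)) = tau P j a * x"
  by (simp add: if_distrib[of "\<lambda>y. _ * y"] cong: if_cong)

lemma sum_tau_involution:
  assumes "bq_wf P"
  shows "(\<Sum>b\<in>UNIV. tau P b a * (tau P c b * x)) = (if c = a then x else 0)"
proof -
  have "(\<Sum>b\<in>UNIV. tau P b a * (tau P c b * x)) = (\<Sum>b\<in>UNIV. tau P c b * tau P b a) * x"
    by (simp add: sum_distrib_left sum_distrib_right ac_simps)
  with assms show ?thesis
    by (simp add: bq_wf_def)
qed

lemma witness_mult_swap:
  assumes "bq_wf P"
  shows "witness_mult P j0 A v u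
    = (\<Sum>B\<in>UNIV. scale_seq (tau (pre_operad P) B A) (witness_mult P j0 B u v))"
proof (rule ext)
  fix n
  obtain a1 a2 where A: "A = (a1, a2)"
    by fastforce
  have rhs: "(\<Sum>B\<in>UNIV. scale_seq (tau (pre_operad P) B A) (witness_mult P j0 B u v)) n
      = - (\<Sum>b\<in>UNIV. tau P b a2 * witness_mult P j0 (\<not> a1, b) u v n)"
    unfolding sum_apply sum_UNIV_prod A tau_pre_operad
    by (cases a1) (simp_all add: scale_seq_def UNIV_bool sum_negf)
  have coord3: "(\<Sum>b\<in>UNIV. tau P b a2 * witness_mult P j0 (\<not> a1, b) u v 3)
      = tau P j0 a2 * (u 0 * v 1) - (if j0 = a2 then u 1 * v 0 else 0)"
    by (simp add: witness_mult_3 right_diff_distrib sum_subtractf sum_tau_delta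
        sum_tau_involution[OF assms])
  have coord4: "(\<Sum>b\<in>UNIV. tau P b a2 * witness_mult P j0 (\<not> a1, b) u v 4)
      = (if a1 then - (if j0 = a2 then u 2 * v 3 else 0) else tau P j0 a2 * (u 3 * v 2))"
    by (cases a1) (simp_all add: witness_mult_4 sum_negf sum_tau_delta sum_tau_involution[OF assms])
  consider "n = 3" | "n = 4" | "n \<noteq> 3 \<and> n \<noteq> 4"
    by blast
  then show "witness_mult P j0 A v u n
      = (\<Sum>B\<in>UNIV. scale_seq (tau (pre_operad P) B A) (witness_mult P j0 B u v)) n"
  proof cases
    case 1
    show ?thesis
      unfolding rhs unfolding 1 coord3 by (simp add: A witness_mult_3 algebra_simps)
  next
    case 2
    show ?thesis
      unfolding rhs unfolding 2 coord4 by (simp add: A witness_mult_4 algebra_simps)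
  next
    case 3
    then show ?thesis
      unfolding rhs by (simp add: witness_mult_other)
  qed
qed

lemma sum_psi_preLie_outer_True:
  fixes s :: "('i::finite, 'k::field) rel3"
  assumes "r \<in> s3_span preLie {preLie_rel}" and "i < 3" and "\<And>a2. g (False, a2) = g (True, a2)"
  shows "(\<Sum>A\<in>UNIV. \<Sum>B\<in>UNIV. psi r s i A B * (if B = (True, j0) then g A else 0)) = 0"
proof -
  have "(\<Sum>A\<in>UNIV. \<Sum>B\<in>UNIV. psi r s i A B * (if B = (True, j0) then g A else 0))
      = (\<Sum>a2\<in>UNIV. (r i True True + r i False True) * (s i a2 j0 * g (True, a2)))"
    unfolding sum_UNIV_prod
    by (simp add: psi_def UNIV_bool assms(3) if_distrib[of "\<lambda>y. _ * y"] sum.distrib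
        ring_distribs ac_simps cong: if_cong)
  with preLie_span_cancel[OF assms(1,2)] show ?thesis
    by simp
qed

lemma rel_eval_witness_mult:
  fixes P :: "('i::finite, 'k::field) bq_operad"
  assumes "r \<in> s3_span preLie {preLie_rel}"
  shows "rel_eval scale_seq (witness_mult P j0) (psi r s) x1 x2 x3 = 0"
proof (rule ext)
  fix n
  define h :: "(nat \<Rightarrow> 'k) \<Rightarrow> (nat \<Rightarrow> 'k) \<Rightarrow> (nat \<Rightarrow> 'k) \<Rightarrow> bool \<times> 'i \<Rightarrow> 'k"
    where "h u v w A = witness_mult P j0 A u v 3 * w 2" for u v w A
  have nested: "witness_mult P j0 B (witness_mult P j0 A u v) w m
      = (if m = 4 then (if B = (True, j0) then h u v w A else 0) else 0)"
    for A B u v w m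
    by (auto simp: h_def witness_mult_def split: prod.split)
  have h_True: "h u v w (False, a2) = h u v w (True, a2)" for u v w a2
    by (simp add: h_def witness_mult_3)
  have "rel_eval scale_seq (witness_mult P j0) (psi r s) x1 x2 x3 n
      = (if n = 4 then
          (\<Sum>A\<in>UNIV. \<Sum>B\<in>UNIV. psi r s 0 A B * (if B = (True, j0) then h x1 x2 x3 A else 0))
        + (\<Sum>A\<in>UNIV. \<Sum>B\<in>UNIV. psi r s 1 A B * (if B = (True, j0) then h x2 x3 x1 A else 0))
        + (\<Sum>A\<in>UNIV. \<Sum>B\<in>UNIV. psi r s 2 A B * (if B = (True, j0) then h x3 x1 x2 A else 0))
        else 0)"
    unfolding rel_eval_def sum_apply
    by (simp add: scale_seq_def nested sum.distrib)
  also have "\<dots> = 0"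
    by (simp add: sum_psi_preLie_outer_True[OF assms _ h_True])
  finally show "rel_eval scale_seq (witness_mult P j0) (psi r s) x1 x2 x3 n = 0 n"
    by simp
qed

lemma is_algebra_witness_mult:
  assumes "bq_wf P"
  shows "is_algebra scale_seq UNIV (pre_operad P) (witness_mult P j0)"
proof -
  have additive:
    "witness_mult P j0 j (x + y) z = witness_mult P j0 j x z + witness_mult P j0 j y z"
    "witness_mult P j0 j z (x + y) = witness_mult P j0 j z x + witness_mult P j0 j z y"
    for j x y z
    by (auto simp: witness_mult_def fun_eq_iff algebra_simps split: prod.split)
  have homogeneous:
    "witness_mult P j0 j (scale_seq c x) y = scale_seq c (witness_mult P j0 j x y)"
    "witness_mult P j0 j x (scale_seq c y) = scale_seq c (witness_mult P j0 j x y)"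
    for j c x y
    by (auto simp: witness_mult_def scale_seq_def fun_eq_iff algebra_simps split: prod.split)
  have relations: "rel_eval scale_seq (witness_mult P j0) r x1 x2 x3 = 0"
    if "r \<in> rels (pre_operad P)" for r x1 x2 x3
    using that rel_eval_witness_mult
    by (auto simp: pre_operad_def black_product_def preLie_def)
  show ?thesis
    unfolding is_algebra_def
    by (intro conjI allI impI ballI UNIV_I vector_space_scale_seq additive homogeneous
        witness_mult_swap[OF assms] relations)
qed

lemma witness_mult_eq_0:
  assumes "u 2 = 0" "u 3 = 0" "v 0 = 0" "v 1 = 0"
  shows "witness_mult P j0 A u v = 0"
  using assms by (auto simp: witness_mult_def fun_eq_iff split: prod.split)

lemma witness_mult_zero_right: "witness_mult P j0 A u 0 = 0"
  by (simp add: witness_mult_def fun_eq_iff split: prod.split)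

lemma witness_mult_unit_0_1: "witness_mult P j0 (True, j0) (unit_seq 0) (unit_seq 1) = unit_seq 3"
  by (simp add: witness_mult_def unit_seq_def fun_eq_iff)

lemma witness_mult_unit_3_2: "witness_mult P j0 (True, j0) (unit_seq 3) (unit_seq 2) = unit_seq 4"
  by (simp add: witness_mult_def unit_seq_def fun_eq_iff)

lemma local_dist_witness_unit_pulse:
  assumes "k < 2"
  shows "local_dist scale_seq (witness_mult P j0) (\<lambda>_. unit_seq k) (\<lambda>t. if t = 0 then unit_seq 2 else 0)"
  using assms
  by (intro vector_space.local_dist_if_products_vanish[OF vector_space_scale_seq] witness_mult_eq_0)
    (auto simp: unit_seq_def)

theorem mainTheorem2:
  fixes P :: "('i::finite, 'k::field) bq_operad"
  assumes "bq_wf P"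
  shows "\<not> Dong_property_in TYPE(nat \<Rightarrow> 'k) (pre_operad P)"
proof
  assume dong: "Dong_property_in TYPE(nat \<Rightarrow> 'k) (pre_operad P)"
  define j0 :: 'i where "j0 = undefined"
  define m where "m = witness_mult P j0"
  define a :: "int \<Rightarrow> nat \<Rightarrow> 'k" where "a = (\<lambda>_. unit_seq 0)"
  define b :: "int \<Rightarrow> nat \<Rightarrow> 'k" where "b = (\<lambda>_. unit_seq 1)"
  define c :: "int \<Rightarrow> nat \<Rightarrow> 'k" where "c = (\<lambda>t. if t = 0 then unit_seq 2 else 0)"
  interpret vector_space scale_seq
    by (rule vector_space_scale_seq)
  have "local_dist scale_seq m a b"
    unfolding a_def b_def by (rule local_dist_const)
  moreover have "local_dist scale_seq m b c" "local_dist scale_seq m a c"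
    unfolding m_def a_def b_def c_def by (simp_all add: local_dist_witness_unit_pulse)
  ultimately have "local_dist scale_seq m (n_product scale_seq (op_of scale_seq m cf) 0 a b) c" for cf
    using dong[unfolded Dong_property_in_def, rule_format, of scale_seq UNIV m a b c]
      is_algebra_witness_mult[OF assms]
    by (simp add: m_def)
  from this[of "\<lambda>j. if j = (True, j0) then 1 else 0"]
  have "local_wrt scale_seq (m (True, j0)) (n_product scale_seq (m (True, j0)) 0 a b) c"
    unfolding local_dist_def by (metis op_of_indicator)
  then have "local_wrt scale_seq (m (True, j0)) (\<lambda>_. unit_seq 3) c"
    by (simp only: n_product_0 a_def b_def m_def witness_mult_unit_0_1)
  moreover have "\<not> local_wrt scale_seq (m (True, j0)) (\<lambda>_. unit_seq 3) c"
    unfolding c_def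
    by (rule not_local_wrt_const_pulse)
      (simp_all add: m_def witness_mult_zero_right witness_mult_unit_3_2 unit_seq_neq_0)
  ultimately show False
    by blast
qed

end
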